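(* Let $P\subseteq\mathbb{P}^{n-1}$ be a full-dimensional polytope and fix $1\le k\le n$. Then $P^{[k]}=\mathrm{cl}(P^{[k]}_{\max})$, the closure being taken in $\mathrm{Gr}(k,n)$.
   Context: Work over $\mathbb{R}$. $\mathrm{Gr}(k,n)$ is the Grassmannian of $k$-dimensional linear subspaces of $\mathbb{R}^n$; subspaces are identified with their images in $\mathbb{P}^{n-1}$. A polytope $P\subseteq\mathbb{P}^{n-1}$ is the image in $\mathbb{P}^{n-1}$ of a cone $\{\sum c_iv_i: c_i\ge0\}$ over finitely many $v_i\in\mathbb{R}^n$ (projectivization of the cone over a polytope in an affine hyperplane not through the origin); faces and dimensions are those of the underlying polytope. $P^{[k]}=\{V\in\mathrm{Gr}(k,n)\mid V\cap P\ne\emptyset\}$ and $P^{[k]}_{\max}=\{V\in P^{[k]}\mid V\cap G=\emptyset$ for every face $G$ of $P$ with $\dim G<n-k\}$. *)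

theory Defs
  imports "HOL-Analysis.Analysis"
begin

text \<open>Points of R^n are vectors of type real^'n, with n = CARD('n).
  A k-dimensional linear subspace V of R^n is identified with its image in P^(n-1).\<close>

definition Gr :: "nat \<Rightarrow> ('n::finite) itself \<Rightarrow> (real^'n) set set" where
  "Gr k _ = {V. subspace V \<and> dim V = k}"

definition orth_proj :: "(real^'n::finite) set \<Rightarrow> real^'n \<Rightarrow> real^'n" where
  "orth_proj V x = (THE v. v \<in> V \<and> (\<forall>w\<in>V. (x - v) \<bullet> w = 0))"

definition proj_matrix :: "(real^'n::finite) set \<Rightarrow> real^'n^'n" where
  "proj_matrix V = matrix (orth_proj V)"

text \<open>Standard topology on Gr(k,n): the one induced by the (injective) embedding
  V \<mapsto> orthogonal projection matrix onto V.\<close>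

definition Gr_topology :: "nat \<Rightarrow> ('n::finite) itself \<Rightarrow> (real^'n) set topology" where
  "Gr_topology k t = pullback_topology (Gr k t) proj_matrix euclidean"

text \<open>A polytope P in P^(n-1) is given as the projectivization of the cone over the
  polytope Q = conv(S), S a finite set lying in an affine hyperplane {x. a . x = b} with b \<noteq> 0.
  Faces and dimension of P are those of Q. A subspace V meets (the image of) a set G \<subseteq> Q
  iff some point of G lies in V (all points of Q are nonzero).\<close>

definition meets :: "(real^'n::finite) set \<Rightarrow> (real^'n) set \<Rightarrow> bool" where
  "meets V G \<longleftrightarrow> (\<exists>x\<in>G. x \<in> V)"

definition Pk :: "(real^'n::finite) set \<Rightarrow> nat \<Rightarrow> (real^'n) set set" where
  "Pk Q k = {V \<in> Gr k TYPE('n). meets V Q}"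

definition Pk_max :: "(real^'n::finite) set \<Rightarrow> nat \<Rightarrow> (real^'n) set set" where
  "Pk_max Q k = {V \<in> Pk Q k. \<forall>G. G face_of Q \<and> aff_dim G < int CARD('n) - int k
       \<longrightarrow> \<not> meets V G}"

end

theory Submission
  imports Defs
begin

text \<open>The set P^[k] is closed: a k-space missing the compact set P has
  positive distance from it, and so has every k-space whose projection is close to its own.
  For density, let V meet P in x0. Move x0 slightly to a point x1 in the relative interior of P;
  as P lies in an affine hyperplane avoiding 0, x1 lies in the span of no proper face of P.
  Take an orthonormal basis of V containing x0/|x0|, replace this vector by x1/|x0| and perturb
  the others generically. The perturbed basis spans a k-space W near V that contains x1 and meets
  the span of every face of dimension less than n - k only in 0, because such spans have
  dimension at most n - k.\<close>

section \<open>Orthogonal projections\<close>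

lemma orth_proj_candidate_unique:
  fixes V :: "'a::real_inner set"
  assumes "subspace V"
    and "v \<in> V" "\<forall>w\<in>V. (x - v) \<bullet> w = 0"
    and "v' \<in> V" "\<forall>w\<in>V. (x - v') \<bullet> w = 0"
  shows "v = v'"
proof -
  have "v' - v \<in> V" using assms by (simp add: subspace_diff)
  then have "(v' - v) \<bullet> (v' - v) = (x - v) \<bullet> (v' - v) - (x - v') \<bullet> (v' - v)"
    by (simp add: inner_diff_left)
  also have "\<dots> = 0" using assms \<open>v' - v \<in> V\<close> by simp
  finally show ?thesis by simp
qed

lemma orth_proj:
  fixes V :: "(real^'n::finite) set"
  assumes "subspace V"
  shows "orth_proj V x \<in> V \<and> (\<forall>w\<in>V. (x - orth_proj V x) \<bullet> w = 0)"
proof -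
  have "span V = V" using assms by (rule span_eq_iff[THEN iffD2])
  then obtain y z where "y \<in> V" and "\<And>w. w \<in> V \<Longrightarrow> orthogonal z w" and "x = y + z"
    using orthogonal_subspace_decomp_exists[of V x] by metis
  then have y: "y \<in> V \<and> (\<forall>w\<in>V. (x - y) \<bullet> w = 0)"
    by (simp add: orthogonal_def)
  show ?thesis
    unfolding orth_proj_def
    by (rule theI[of _ y]) (use y orth_proj_candidate_unique[OF assms] in blast)+
qed

lemma orth_proj_in_subspace: "subspace V \<Longrightarrow> orth_proj V x \<in> V"
  using orth_proj by blast

lemma orth_proj_orthogonal: "subspace V \<Longrightarrow> w \<in> V \<Longrightarrow> (x - orth_proj V x) \<bullet> w = 0"
  using orth_proj by blast

lemma orth_proj_eqI:
  assumes "subspace V" "v \<in> V" "\<forall>w\<in>V. (x - v) \<bullet> w = 0"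
  shows "orth_proj V x = v"
  using orth_proj_candidate_unique[OF assms(1) _ _ assms(2,3)] orth_proj[OF assms(1)] by blast

lemma orth_proj_id: "subspace V \<Longrightarrow> v \<in> V \<Longrightarrow> orth_proj V v = v"
  by (rule orth_proj_eqI) auto

lemma linear_orth_proj:
  assumes "subspace V"
  shows "linear (orth_proj V)"
proof
  fix x y
  show "orth_proj V (x + y) = orth_proj V x + orth_proj V y"
    using assms by (intro orth_proj_eqI)
      (simp_all add: subspace_add orth_proj_in_subspace add_diff_add inner_add_left orth_proj_orthogonal)
next
  fix c :: real and x
  show "orth_proj V (c *\<^sub>R x) = c *\<^sub>R orth_proj V x"
    using assms by (intro orth_proj_eqI)
      (simp_all add: subspace_scale orth_proj_in_subspace orth_proj_orthogonal flip: scaleR_diff_right)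
qed

lemma proj_matrix_mult: "subspace V \<Longrightarrow> proj_matrix V *v x = orth_proj V x"
  unfolding proj_matrix_def by (simp add: linear_orth_proj)

lemma norm_orth_proj_le:
  assumes "subspace V"
  shows "norm (orth_proj V x) \<le> norm x"
proof -
  have "orthogonal (x - orth_proj V x) (orth_proj V x)"
    using assms by (simp add: orthogonal_def orth_proj_orthogonal orth_proj_in_subspace)
  then have "norm x ^ 2 = norm (orth_proj V x) ^ 2 + norm (x - orth_proj V x) ^ 2"
    using norm_add_Pythagorean[of "orth_proj V x" "x - orth_proj V x"] by (simp add: orthogonal_commute)
  then show ?thesis by (simp add: power2_le_imp_le)
qed

lemma orth_proj_closest:
  assumes "subspace V" "w \<in> V"
  shows "norm (x - orth_proj V x) \<le> norm (x - w)"
proof -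
  have "orthogonal (x - orth_proj V x) (orth_proj V x - w)"
    using assms by (simp add: orthogonal_def orth_proj_orthogonal orth_proj_in_subspace subspace_diff)
  then have "norm (x - w) ^ 2 = norm (x - orth_proj V x) ^ 2 + norm (orth_proj V x - w) ^ 2"
    using norm_add_Pythagorean by fastforce
  then show ?thesis by (simp add: power2_le_imp_le)
qed

lemma norm_orth_proj_diff_le:
  assumes V: "subspace V" and W: "subspace W" and "d1 \<ge> 0" "d2 \<ge> 0"
    and VW: "\<forall>v\<in>V. norm (v - orth_proj W v) \<le> d1 * norm v"
    and WV: "\<forall>w\<in>W. norm (w - orth_proj V w) \<le> d2 * norm w"
  shows "norm (orth_proj V x - orth_proj W x) \<le> (d1 + d2) * norm x"
proof -
  define p where "p = orth_proj W x"
  define q where "q = orth_proj V (x - p)"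
  have "orth_proj V x = q + orth_proj V p"
    unfolding q_def using linear_diff[OF linear_orth_proj[OF V]] by simp
  \<comment> \<open>q is small because x - p is orthogonal to W, and p - orth_proj V p by the hypothesis on W\<close>
  then have split: "orth_proj V x - orth_proj W x = q - (p - orth_proj V p)"
    by (simp add: p_def)
  have "norm (p - orth_proj V p) \<le> d2 * norm p"
    using WV orth_proj_in_subspace[OF W] unfolding p_def by blast
  also have "\<dots> \<le> d2 * norm x"
    unfolding p_def using norm_orth_proj_le[OF W] \<open>d2 \<ge> 0\<close> by (simp add: mult_left_mono)
  finally have p_bound: "norm (p - orth_proj V p) \<le> d2 * norm x" .
  have "(x - p - q) \<bullet> q = 0"
    unfolding q_def by (rule orth_proj_orthogonal[OF V orth_proj_in_subspace[OF V]])
  moreover have "(x - p) \<bullet> orth_proj W q = 0"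
    unfolding p_def by (rule orth_proj_orthogonal[OF W orth_proj_in_subspace[OF W]])
  ultimately have "q \<bullet> q = (q - orth_proj W q) \<bullet> (x - p)"
    by (simp add: inner_diff_left inner_diff_right inner_commute)
  also have "\<dots> \<le> norm (q - orth_proj W q) * norm (x - p)"
    by (rule norm_cauchy_schwarz)
  also have "\<dots> \<le> d1 * norm q * norm (x - p)"
    using VW orth_proj_in_subspace[OF V] unfolding q_def by (simp add: mult_right_mono)
  finally have "norm q ^ 2 \<le> d1 * norm q * norm (x - p)"
    by (simp add: power2_norm_eq_inner)
  then have "norm q \<le> d1 * norm (x - p)"
    by (cases "norm q = 0") (use \<open>d1 \<ge> 0\<close> in \<open>auto simp: power2_eq_square\<close>)
  also have "\<dots> \<le> d1 * norm x"
    using orth_proj_closest[OF W subspace_0[OF W], of x] \<open>d1 \<ge> 0\<close>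
    unfolding p_def by (simp add: mult_left_mono)
  finally have q_bound: "norm q \<le> d1 * norm x" .
  have "norm (orth_proj V x - orth_proj W x) \<le> norm q + norm (p - orth_proj V p)"
    unfolding split by (rule norm_triangle_ineq4)
  also have "\<dots> \<le> (d1 + d2) * norm x"
    using q_bound p_bound by (simp add: distrib_right)
  finally show ?thesis .
qed

section \<open>The topology of the Grassmannian\<close>

lemma norm_matrix_le_onorm:
  fixes A :: "real^'n::finite^'m::finite"
  shows "norm A \<le> real CARD('m) * real CARD('n) * onorm ((*v) A)"
proof -
  have "norm A \<le> (\<Sum>i\<in>UNIV. norm (A $ i))"
    unfolding norm_vec_def by (rule L2_set_le_sum) simp
  also have "\<dots> \<le> (\<Sum>i\<in>UNIV. \<Sum>j\<in>UNIV. \<bar>A $ i $ j\<bar>)"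
    by (intro sum_mono norm_le_l1_cart)
  also have "\<dots> \<le> (\<Sum>i::'m\<in>UNIV. \<Sum>j::'n\<in>UNIV. onorm ((*v) A))"
    by (intro sum_mono matrix_component_le_onorm)
  finally show ?thesis by simp
qed

lemma onorm_le_norm_matrix:
  fixes A :: "real^'n::finite^'m::finite"
  shows "onorm ((*v) A) \<le> real CARD('m) * real CARD('n) * norm A"
proof (rule onorm_le_matrix_component)
  fix i j
  have "\<bar>A $ i $ j\<bar> \<le> norm (A $ i)" by (rule component_le_norm_cart)
  also have "\<dots> \<le> norm A" by (rule Finite_Cartesian_Product.norm_nth_le)
  finally show "\<bar>A $ i $ j\<bar> \<le> norm A" .
qed

lemma dist_proj_matrix_le:
  fixes V W :: "(real^'n::finite) set"
  assumes "subspace V" "subspace W" "\<And>x. norm (orth_proj V x - orth_proj W x) \<le> c * norm x"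
  shows "dist (proj_matrix V) (proj_matrix W) \<le> real CARD('n) * real CARD('n) * c"
proof -
  have "onorm ((*v) (proj_matrix V - proj_matrix W)) \<le> c"
    using assms by (intro onorm_le) (simp add: matrix_vector_mult_diff_rdistrib proj_matrix_mult)
  then show ?thesis
    using norm_matrix_le_onorm[of "proj_matrix V - proj_matrix W"]
    by (simp add: dist_norm mult_left_mono order_trans)
qed

lemma norm_orth_proj_diff_le_dist:
  fixes V W :: "(real^'n::finite) set"
  assumes "subspace V" "subspace W"
  shows "norm (orth_proj V x - orth_proj W x)
    \<le> real CARD('n) * real CARD('n) * dist (proj_matrix V) (proj_matrix W) * norm x"
proof -
  have "norm (orth_proj V x - orth_proj W x) = norm ((proj_matrix V - proj_matrix W) *v x)"
    using assms by (simp add: matrix_vector_mult_diff_rdistrib proj_matrix_mult)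
  also have "\<dots> \<le> onorm ((*v) (proj_matrix V - proj_matrix W)) * norm x"
    by (rule onorm) simp
  also have "\<dots> \<le> real CARD('n) * real CARD('n) * dist (proj_matrix V) (proj_matrix W) * norm x"
    using onorm_le_norm_matrix[of "proj_matrix V - proj_matrix W"]
    by (simp add: dist_norm mult_right_mono)
  finally show ?thesis .
qed

lemma topspace_Gr_topology [simp]: "topspace (Gr_topology k TYPE('n::finite)) = Gr k TYPE('n)"
  unfolding Gr_topology_def by (simp add: topspace_pullback_topology)

lemma in_closure_of_Gr_iff:
  fixes X :: "(real^'n::finite) set set"
  assumes "X \<subseteq> Gr k TYPE('n)"
  shows "V \<in> Gr_topology k TYPE('n) closure_of X \<longleftrightarrow>
    V \<in> Gr k TYPE('n) \<and> (\<forall>e>0. \<exists>W\<in>X. dist (proj_matrix W) (proj_matrix V) < e)"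
proof -
  have open_Gr: "openin (Gr_topology k TYPE('n)) T \<longleftrightarrow>
      (\<exists>U. open U \<and> T = proj_matrix -` U \<inter> Gr k TYPE('n))" for T
    unfolding Gr_topology_def openin_pullback_topology by auto
  have "(\<forall>T. V \<in> T \<and> openin (Gr_topology k TYPE('n)) T \<longrightarrow> (\<exists>W\<in>X. W \<in> T)) \<longleftrightarrow>
      (\<forall>e>0. \<exists>W\<in>X. dist (proj_matrix W) (proj_matrix V) < e)" if "V \<in> Gr k TYPE('n)"
  proof
    assume "\<forall>T. V \<in> T \<and> openin (Gr_topology k TYPE('n)) T \<longrightarrow> (\<exists>W\<in>X. W \<in> T)"
    then show "\<forall>e>0. \<exists>W\<in>X. dist (proj_matrix W) (proj_matrix V) < e"
      using that open_Gr[of "proj_matrix -` ball (proj_matrix V) _ \<inter> Gr k TYPE('n)"]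
      by (metis (no_types, lifting) IntE IntI centre_in_ball dist_commute mem_ball open_ball vimageE vimageI)
  next
    assume approx: "\<forall>e>0. \<exists>W\<in>X. dist (proj_matrix W) (proj_matrix V) < e"
    show "\<forall>T. V \<in> T \<and> openin (Gr_topology k TYPE('n)) T \<longrightarrow> (\<exists>W\<in>X. W \<in> T)"
    proof (intro allI impI)
      fix T assume "V \<in> T \<and> openin (Gr_topology k TYPE('n)) T"
      then obtain U where U: "open U" "T = proj_matrix -` U \<inter> Gr k TYPE('n)" "proj_matrix V \<in> U"
        using open_Gr by auto
      then obtain e where "e > 0" "ball (proj_matrix V) e \<subseteq> U"
        using open_contains_ball by blast
      with approx obtain W where "W \<in> X" "proj_matrix W \<in> U"
        by (metis dist_commute mem_ball subsetD)
      then show "\<exists>W\<in>X. W \<in> T" using U(2) assms by blast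
    qed
  qed
  then show ?thesis unfolding in_closure_of topspace_Gr_topology by blast
qed

lemma closedin_Pk:
  fixes Q :: "(real^'n::finite) set"
  assumes "compact Q"
  shows "closedin (Gr_topology k TYPE('n)) (Pk Q k)"
proof -
  let ?n = "real CARD('n)"
  have Pk_Gr: "Pk Q k \<subseteq> Gr k TYPE('n)" by (auto simp: Pk_def)
  have "V \<in> Pk Q k" if V: "V \<in> Gr_topology k TYPE('n) closure_of Pk Q k" for V
  proof (rule ccontr)
    assume "V \<notin> Pk Q k"
    have "V \<in> Gr k TYPE('n)"
      and approx: "\<And>e. e > 0 \<Longrightarrow> \<exists>W\<in>Pk Q k. dist (proj_matrix W) (proj_matrix V) < e"
      using V in_closure_of_Gr_iff[OF Pk_Gr] by auto
    then have sV: "subspace V" and VQ: "V \<inter> Q = {}"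
      using \<open>V \<notin> Pk Q k\<close> by (auto simp: Gr_def Pk_def meets_def)
    have "Q \<noteq> {}" using approx[of 1] by (auto simp: Pk_def meets_def)
    define f where "f x = norm (x - proj_matrix V *v x)" for x
    have "continuous_on Q f" unfolding f_def by (intro continuous_intros)
    then obtain x0 where "x0 \<in> Q" and x0_min: "\<And>x. x \<in> Q \<Longrightarrow> f x0 \<le> f x"
      using continuous_attains_inf[OF assms \<open>Q \<noteq> {}\<close>] by blast
    have "f x0 > 0"
      using VQ \<open>x0 \<in> Q\<close> orth_proj_in_subspace[OF sV, of x0] by (auto simp: f_def proj_matrix_mult[OF sV])
    obtain M where "M > 0" and M: "\<And>x. x \<in> Q \<Longrightarrow> norm x \<le> M"
      using compact_imp_bounded[OF assms] bounded_pos by blast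
    obtain W where "W \<in> Pk Q k" and W: "dist (proj_matrix W) (proj_matrix V) < f x0 / (?n * ?n * M)"
      using approx[of "f x0 / (?n * ?n * M)"] \<open>f x0 > 0\<close> \<open>M > 0\<close> by auto
    then obtain x where "x \<in> Q" "x \<in> W" and sW: "subspace W"
      by (auto simp: Pk_def Gr_def meets_def)
    have "f x = norm (orth_proj W x - orth_proj V x)"
      using \<open>x \<in> W\<close> by (simp add: f_def proj_matrix_mult[OF sV] orth_proj_id[OF sW])
    also have "\<dots> \<le> ?n * ?n * dist (proj_matrix W) (proj_matrix V) * norm x"
      by (rule norm_orth_proj_diff_le_dist[OF sW sV])
    also have "\<dots> \<le> ?n * ?n * dist (proj_matrix W) (proj_matrix V) * M"
      using M[OF \<open>x \<in> Q\<close>] by (simp add: mult_left_mono)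
    also have "\<dots> < f x0"
      using W \<open>M > 0\<close> by (simp add: field_simps)
    finally show False using x0_min[OF \<open>x \<in> Q\<close>] by simp
  qed
  then have "Gr_topology k TYPE('n) closure_of Pk Q k \<subseteq> Pk Q k" by blast
  with Pk_Gr show ?thesis by (simp flip: closure_of_subset_eq)
qed

section \<open>Perturbing orthonormal bases\<close>

lemma interior_Union_lowdim_subspaces:
  fixes F :: "'a::euclidean_space set set"
  assumes "finite F" "\<forall>L\<in>F. subspace L \<and> dim L < DIM('a)"
  shows "interior (\<Union>F) = {}"
  using assms
proof (induction F rule: finite_induct)
  case (insert L F)
  then have "interior (L \<union> \<Union>F) = interior L"
    by (intro interior_closed_Un_empty_interior) (auto simp: closed_subspace)
  also have "\<dots> = {}" using insert.prems by (intro empty_interior_lowdim) simp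
  finally show ?case by simp
qed simp

lemma exists_near_notin_subspaces:
  fixes F :: "'a::euclidean_space set set"
  assumes "finite F" "\<forall>L\<in>F. subspace L \<and> dim L < DIM('a)" "\<eta> > 0"
  obtains z where "norm (z - b) < \<eta>" "\<forall>L\<in>F. z \<notin> L"
proof -
  have "\<not> ball b \<eta> \<subseteq> \<Union>F"
  proof
    assume "ball b \<eta> \<subseteq> \<Union>F"
    then have "ball b \<eta> \<subseteq> interior (\<Union>F)" by (simp add: interior_maximal)
    then show False using interior_Union_lowdim_subspaces[OF assms(1,2)] assms(3) by auto
  qed
  then obtain z where "z \<in> ball b \<eta>" "z \<notin> \<Union>F" by blast
  then show ?thesis by (intro that) (auto simp: dist_norm norm_minus_commute)
qed

lemma dim_Un_le_card:
  fixes X :: "'a::euclidean_space set"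
  assumes "finite X"
  shows "dim (L \<union> X) \<le> dim L + card X"
proof -
  obtain BL where "BL \<subseteq> L" "independent BL" "L \<subseteq> span BL" "card BL = dim L"
    using basis_exists by blast
  moreover have "L \<union> X \<subseteq> span (BL \<union> X)"
    using \<open>L \<subseteq> span BL\<close> span_mono[of BL "BL \<union> X"] span_superset[of "BL \<union> X"] by blast
  ultimately have "dim (L \<union> X) \<le> card (BL \<union> X)"
    using assms by (intro dim_le_card) (auto intro: finiteI_independent)
  also have "\<dots> \<le> card BL + card X" by (rule card_Un_le)
  finally show ?thesis using \<open>card BL = dim L\<close> by simp
qed

lemma span_insert_Int_subset_zero:
  fixes X L :: "'a::real_vector set"
  assumes "span X \<inter> L \<subseteq> {0}" "z \<notin> span (L \<union> X)"
  shows "span (insert z X) \<inter> L \<subseteq> {0}"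
proof
  fix u assume u: "u \<in> span (insert z X) \<inter> L"
  then obtain c where c: "u - c *\<^sub>R z \<in> span X" by (auto simp: span_insert)
  have "c = 0"
  proof (rule ccontr)
    assume "c \<noteq> 0"
    have "u \<in> span (L \<union> X)" using u span_superset[of "L \<union> X"] by blast
    moreover have "u - c *\<^sub>R z \<in> span (L \<union> X)" using c span_mono[of X "L \<union> X"] by blast
    ultimately have "c *\<^sub>R z \<in> span (L \<union> X)" using span_diff by force
    then have "z \<in> span (L \<union> X)"
      using \<open>c \<noteq> 0\<close> span_mul[of "c *\<^sub>R z" _ "inverse c"] by simp
    then show False using assms(2) by blast
  qed
  then show "u \<in> {0}" using c u assms(1) by auto
qed

text \<open>The vectors of B are replaced one at a time by nearby vectors z avoiding span X and
  every span (L \<union> X), where X consists of the vectors chosen so far; the dimension bounds make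
  these proper subspaces.\<close>

lemma exists_perturbation_avoiding_subspaces:
  fixes A B :: "'a::euclidean_space set" and F :: "'a set set"
  assumes "finite B" "finite F" "independent A"
    and "\<forall>L\<in>F. subspace L \<and> dim L + card A + card B \<le> DIM('a) \<and> span A \<inter> L \<subseteq> {0}"
    and "card A + card B \<le> DIM('a)" "\<eta> > 0"
  shows "\<exists>w. (\<forall>b\<in>B. norm (w b - b) < \<eta>) \<and> independent (A \<union> w ` B) \<and>
      card (A \<union> w ` B) = card A + card B \<and> (\<forall>L\<in>F. span (A \<union> w ` B) \<inter> L \<subseteq> {0})"
  using assms
proof (induction B rule: finite_induct)
  case empty
  then show ?case by auto
next
  case (insert b B)
  then obtain w where w_near: "\<forall>b\<in>B. norm (w b - b) < \<eta>" and indep: "independent (A \<union> w ` B)"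
      and card: "card (A \<union> w ` B) = card A + card B" and avoid: "\<forall>L\<in>F. span (A \<union> w ` B) \<inter> L \<subseteq> {0}"
    by fastforce
  define X where "X = A \<union> w ` B"
  have "finite X" using indep finiteI_independent unfolding X_def by blast
  define F' where "F' = insert (span X) ((\<lambda>L. span (L \<union> X)) ` F)"
  have "card X + 1 \<le> DIM('a)" using card insert.prems(4) insert.hyps unfolding X_def by simp
  have "dim (span X) < DIM('a)"
    using \<open>card X + 1 \<le> DIM('a)\<close> dim_eq_card_independent[OF indep] unfolding X_def by simp
  moreover have "dim (span (L \<union> X)) < DIM('a)" if "L \<in> F" for L
    using dim_Un_le_card[OF \<open>finite X\<close>, of L] insert.prems(3) insert.hyps that card
    unfolding X_def by fastforce
  ultimately have "\<forall>L'\<in>F'. subspace L' \<and> dim L' < DIM('a)" unfolding F'_def by auto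
  moreover have "finite F'" unfolding F'_def using insert.prems(1) by simp
  ultimately obtain z where z_near: "norm (z - b) < \<eta>" and z_avoid: "\<forall>L\<in>F'. z \<notin> L"
    using exists_near_notin_subspaces \<open>\<eta> > 0\<close> by blast
  have "z \<notin> span X" using z_avoid unfolding F'_def by blast
  define w' where "w' = w(b := z)"
  have "w' ` B = w ` B" unfolding w'_def using insert.hyps(2) by (auto intro!: image_cong)
  then have X': "A \<union> w' ` insert b B = insert z X" unfolding X_def w'_def by auto
  show ?case
  proof (intro exI[of _ w'] conjI)
    show "\<forall>b'\<in>insert b B. norm (w' b' - b') < \<eta>"
      using w_near z_near insert.hyps(2) by (auto simp: w'_def)
    show "independent (A \<union> w' ` insert b B)"
      unfolding X' using independent_insertI[OF \<open>z \<notin> span X\<close>] indep X_def by blast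
    have "z \<notin> X" using \<open>z \<notin> span X\<close> span_superset by blast
    then have "card (insert z X) = card X + 1" using \<open>finite X\<close> by simp
    then show "card (A \<union> w' ` insert b B) = card A + card (insert b B)"
      unfolding X' using card insert.hyps unfolding X_def by simp
    show "\<forall>L\<in>F. span (A \<union> w' ` insert b B) \<inter> L \<subseteq> {0}"
    proof
      fix L assume "L \<in> F"
      then have "span X \<inter> L \<subseteq> {0}" and "z \<notin> span (L \<union> X)"
        using avoid z_avoid unfolding X_def F'_def by auto
      then show "span (A \<union> w' ` insert b B) \<inter> L \<subseteq> {0}"
        unfolding X' by (rule span_insert_Int_subset_zero)
    qed
  qed
qed

lemma orthonormal_basis_subspace_containing:
  fixes V :: "'a::euclidean_space set"
  assumes "subspace V" "v \<in> V" "norm v = 1"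
  obtains E where "v \<in> E" "span E = V" "pairwise orthogonal E" "\<And>e. e \<in> E \<Longrightarrow> norm e = 1"
    "independent E" "card E = dim V"
proof -
  define V' where "V' = V \<inter> {y. v \<bullet> y = 0}"
  have "subspace V'" unfolding V'_def using assms(1) subspace_hyperplane by (rule subspace_inter)
  then obtain B where B: "B \<subseteq> V'" "pairwise orthogonal B" "\<And>x. x \<in> B \<Longrightarrow> norm x = 1"
    and span_B: "span B = V'"
    using orthonormal_basis_subspace[of V'] by blast
  have "orthogonal v y" if "y \<in> B" for y
    using B(1) that unfolding V'_def by (auto simp: orthogonal_def)
  then have orth: "pairwise orthogonal (insert v B)"
    using B(2) unfolding pairwise_insert by (simp add: orthogonal_commute)
  have unit: "\<And>e. e \<in> insert v B \<Longrightarrow> norm e = 1" using B(3) assms(3) by auto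
  then have indep: "independent (insert v B)"
    using orth pairwise_orthogonal_independent by force
  have "insert v B \<subseteq> V" using assms(2) B(1) unfolding V'_def by blast
  then have "span (insert v B) \<subseteq> V" using assms(1) by (rule span_minimal)
  moreover have "y \<in> span (insert v B)" if "y \<in> V" for y
  proof -
    have "v \<bullet> (y - (v \<bullet> y) *\<^sub>R v) = 0"
      using assms(3) by (simp add: inner_diff_right norm_eq_1)
    moreover have "y - (v \<bullet> y) *\<^sub>R v \<in> V"
      using that assms(1,2) by (simp add: subspace_diff subspace_scale)
    ultimately have "y - (v \<bullet> y) *\<^sub>R v \<in> V'" unfolding V'_def by simp
    then show ?thesis unfolding span_insert span_B by blast
  qed
  ultimately have span: "span (insert v B) = V" by blast
  then have "card (insert v B) = dim V"
    using dim_eq_card_independent[OF indep] dim_span by metis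
  with that[of "insert v B"] orth unit indep span show ?thesis by blast
qed

lemma norm_linear_perturbation_le:
  fixes E :: "'a::euclidean_space set" and T :: "'a \<Rightarrow> 'a"
  assumes "finite E" "pairwise orthogonal E" "\<And>e. e \<in> E \<Longrightarrow> norm e = 1"
    and "linear T" "\<And>e. e \<in> E \<Longrightarrow> norm (T e - e) \<le> \<eta>" "v \<in> span E"
  shows "norm (T v - v) \<le> real (card E) * \<eta> * norm v"
proof -
  define c where "c e = v \<bullet> e" for e
  have v: "v = (\<Sum>e\<in>E. c e *\<^sub>R e)"
    using orthonormal_basis_expand[OF assms(2,3,6,1)] unfolding c_def by simp
  have "T v = (\<Sum>e\<in>E. c e *\<^sub>R T e)"
    by (subst v) (simp add: linear_sum[OF assms(4)] linear_scale[OF assms(4)])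
  moreover have "(\<Sum>e\<in>E. c e *\<^sub>R (T e - e)) = (\<Sum>e\<in>E. c e *\<^sub>R T e) - (\<Sum>e\<in>E. c e *\<^sub>R e)"
    by (simp add: scaleR_diff_right sum_subtractf)
  ultimately have "T v - v = (\<Sum>e\<in>E. c e *\<^sub>R (T e - e))"
    using v by simp
  then have "norm (T v - v) \<le> (\<Sum>e\<in>E. \<bar>c e\<bar> * norm (T e - e))"
    using norm_sum[of "\<lambda>e. c e *\<^sub>R (T e - e)" E] by simp
  also have "\<dots> \<le> (\<Sum>e\<in>E. norm v * \<eta>)"
  proof (rule sum_mono)
    fix e assume "e \<in> E"
    have "\<bar>c e\<bar> \<le> norm v"
      using Cauchy_Schwarz_ineq2[of v e] assms(3)[OF \<open>e \<in> E\<close>] unfolding c_def by simp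
    then show "\<bar>c e\<bar> * norm (T e - e) \<le> norm v * \<eta>"
      using assms(5)[OF \<open>e \<in> E\<close>] by (simp add: mult_mono')
  qed
  finally show ?thesis by (simp add: mult.commute mult.left_commute)
qed

lemma norm_orth_proj_perturbed_basis_le:
  fixes E :: "(real^'n::finite) set" and T :: "real^'n \<Rightarrow> real^'n"
  assumes "finite E" "pairwise orthogonal E" "\<And>e. e \<in> E \<Longrightarrow> norm e = 1"
    and "linear T" "\<And>e. e \<in> E \<Longrightarrow> norm (T e - e) \<le> \<eta>" and small: "real (card E) * \<eta> \<le> 1/2"
  shows "norm (orth_proj (span E) x - orth_proj (span (T ` E)) x) \<le> 3 * real (card E) * \<eta> * norm x"
proof -
  define d where "d = real (card E) * \<eta>"
  have "d \<ge> 0"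
  proof (cases "E = {}")
    case False
    then obtain e where "e \<in> E" by blast
    then have "\<eta> \<ge> 0" using assms(5) norm_ge_zero order_trans by blast
    then show ?thesis unfolding d_def by simp
  qed (simp add: d_def)
  have near: "norm (T v - v) \<le> d * norm v" if "v \<in> span E" for v
    unfolding d_def by (rule norm_linear_perturbation_le[OF assms(1-5) that])
  have span_TE: "span (T ` E) = T ` span E"
    by (simp add: span_linear_image assms(4))
  have "norm (v - orth_proj (span (T ` E)) v) \<le> d * norm v" if "v \<in> span E" for v
  proof -
    have "norm (v - orth_proj (span (T ` E)) v) \<le> norm (v - T v)"
      by (intro orth_proj_closest subspace_span) (use that span_TE in auto)
    then show ?thesis using near[OF that] by (simp add: norm_minus_commute)
  qed
  moreover have "norm (w - orth_proj (span E) w) \<le> (2 * d) * norm w" if "w \<in> span (T ` E)" for w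
  proof -
    from that obtain u where "u \<in> span E" and w: "w = T u" unfolding span_TE by blast
    have "norm u \<le> norm w + norm (T u - u)"
      using norm_triangle_sub[of u "T u"] w by (simp add: norm_minus_commute)
    also have "\<dots> \<le> norm w + norm u / 2"
      using near[OF \<open>u \<in> span E\<close>] small mult_right_mono[OF small, of "norm u"] unfolding d_def by simp
    finally have "norm u \<le> 2 * norm w" by simp
    have "norm (w - orth_proj (span E) w) \<le> norm (w - u)"
      using \<open>u \<in> span E\<close> by (intro orth_proj_closest) auto
    also have "\<dots> \<le> d * norm u" using near[OF \<open>u \<in> span E\<close>] w by simp
    also have "\<dots> \<le> d * (2 * norm w)" using \<open>norm u \<le> 2 * norm w\<close> \<open>d \<ge> 0\<close> by (rule mult_left_mono)
    finally show ?thesis by simp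
  qed
  ultimately have "norm (orth_proj (span E) x - orth_proj (span (T ` E)) x) \<le> (d + 2 * d) * norm x"
    using \<open>d \<ge> 0\<close> by (intro norm_orth_proj_diff_le) auto
  then show ?thesis unfolding d_def by argo
qed

lemma exists_subspace_near_avoiding:
  fixes V :: "(real^'n::finite) set" and F :: "(real^'n) set set"
  assumes V: "subspace V" "v \<in> V" "norm v = 1"
    and near: "norm (u - v) < \<eta>" and small: "real (dim V) * \<eta> \<le> 1/2"
    and F: "finite F" "\<forall>L\<in>F. subspace L \<and> dim L + dim V \<le> CARD('n) \<and> u \<notin> L"
  obtains W where "subspace W" "dim W = dim V" "u \<in> W" "\<forall>L\<in>F. W \<inter> L \<subseteq> {0}"
    "\<And>x. norm (orth_proj V x - orth_proj W x) \<le> 3 * real (dim V) * \<eta> * norm x"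
proof -
  obtain E where "v \<in> E" and span_E: "span E = V" and orth: "pairwise orthogonal E"
    and unit: "\<And>e. e \<in> E \<Longrightarrow> norm e = 1" and "independent E" and card_E: "card E = dim V"
    using orthonormal_basis_subspace_containing[OF V] by blast
  then have "finite E" using finiteI_independent by blast
  then have "dim V \<ge> 1" using \<open>v \<in> E\<close> card_E by (metis card_0_eq empty_iff less_one not_le)
  define B where "B = E - {v}"
  have "finite B" and card_B: "card {u} + card B = dim V"
    using \<open>finite E\<close> \<open>v \<in> E\<close> card_E \<open>dim V \<ge> 1\<close> unfolding B_def by auto
  have "\<eta> > 0" using near norm_ge_zero[of "u - v"] by linarith
  have "u \<noteq> 0"
  proof
    assume "u = 0"
    then have "1 < \<eta>" using near V(3) by simp
    moreover have "1 * \<eta> \<le> real (dim V) * \<eta>"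
      using \<open>dim V \<ge> 1\<close> \<open>\<eta> > 0\<close> by (intro mult_right_mono) auto
    ultimately show False using small by linarith
  qed
  then have "independent {u}" by simp
  have "span {u} \<inter> L \<subseteq> {0}" if "L \<in> F" for L
    using span_insert_Int_subset_zero[of "{}" L u] F(2) that by (simp add: span_eq_iff[THEN iffD2])
  then have "\<forall>L\<in>F. subspace L \<and> dim L + card {u} + card B \<le> CARD('n) \<and> span {u} \<inter> L \<subseteq> {0}"
    using F(2) card_B by auto
  moreover have "card {u} + card B \<le> CARD('n)" using dim_subset_UNIV_cart card_B by metis
  ultimately obtain w where w_near: "\<forall>b\<in>B. norm (w b - b) < \<eta>" and "independent ({u} \<union> w ` B)"
      and card_uwB: "card ({u} \<union> w ` B) = card {u} + card B"
      and avoid: "\<forall>L\<in>F. span ({u} \<union> w ` B) \<inter> L \<subseteq> {0}"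
    using exists_perturbation_avoiding_subspaces[OF \<open>finite B\<close> F(1) \<open>independent {u}\<close>,
        unfolded DIM_cart DIM_real mult_1_right] \<open>\<eta> > 0\<close>
    by blast
  define f where "f = w(v := u)"
  obtain T where "linear T" and T: "\<forall>e\<in>E. T e = f e"
    using linear_independent_extend[OF \<open>independent E\<close>] by blast
  have "E = insert v B" using \<open>v \<in> E\<close> unfolding B_def by blast
  moreover have "T ` B = w ` B" using T unfolding B_def f_def by (intro image_cong) auto
  ultimately have TE: "T ` E = {u} \<union> w ` B" using T \<open>v \<in> E\<close> by (simp add: f_def)
  show ?thesis
  proof
    show "subspace (span (T ` E))" by simp
    show "dim (span (T ` E)) = dim V"
      unfolding TE dim_span using dim_eq_card_independent[OF \<open>independent ({u} \<union> w ` B)\<close>]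
        card_uwB card_B by simp
    show "u \<in> span (T ` E)" unfolding TE by (simp add: span_base)
    show "\<forall>L\<in>F. span (T ` E) \<inter> L \<subseteq> {0}" unfolding TE by (rule avoid)
    have "norm (T e - e) \<le> \<eta>" if "e \<in> E" for e
      using that T w_near near unfolding B_def f_def by (cases "e = v") (auto simp: less_imp_le)
    then show "norm (orth_proj V x - orth_proj (span (T ` E)) x) \<le> 3 * real (dim V) * \<eta> * norm x" for x
      using norm_orth_proj_perturbed_basis_le[OF \<open>finite E\<close> orth unit \<open>linear T\<close>] small
      unfolding span_E card_E by blast
  qed
qed

section \<open>Faces of the polytope\<close>

lemma span_Int_hyperplane_subset_affine_hull:
  fixes G :: "'a::euclidean_space set"
  assumes "G \<subseteq> {x. a \<bullet> x = b}" "b \<noteq> 0"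
  shows "span G \<inter> {x. a \<bullet> x = b} \<subseteq> affine hull G"
proof
  fix x assume x: "x \<in> span G \<inter> {x. a \<bullet> x = b}"
  then obtain T u where T: "finite T" "T \<subseteq> G" "(\<Sum>v\<in>T. u v *\<^sub>R v) = x"
    unfolding span_explicit by blast
  have "b = (\<Sum>v\<in>T. u v * (a \<bullet> v))"
    using x unfolding T(3)[symmetric] by (simp add: inner_sum_right)
  also have "\<dots> = b * sum u T"
    using T(2) assms(1) by (auto simp: sum_distrib_left mult.commute intro!: sum.cong)
  finally have "sum u T = 1" using assms(2) by simp
  then show "x \<in> affine hull G"
    unfolding affine_hull_explicit using T by (intro CollectI exI[of _ T] exI[of _ u]) auto
qed

lemma rel_interior_notin_span_face:
  fixes Q :: "'a::euclidean_space set"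
  assumes "convex Q" "Q \<subseteq> {x. a \<bullet> x = b}" "b \<noteq> 0"
    and "G face_of Q" "G \<noteq> Q" "x \<in> rel_interior Q"
  shows "x \<notin> span G"
proof
  assume "x \<in> span G"
  moreover have "a \<bullet> x = b" using assms(2,6) rel_interior_subset by blast
  moreover have "G \<subseteq> {x. a \<bullet> x = b}" using assms(2,4) face_of_imp_subset by blast
  ultimately have "x \<in> affine hull G"
    using span_Int_hyperplane_subset_affine_hull assms(3) by blast
  then show False
    using affine_hull_face_of_disjoint_rel_interior[OF assms(1,4,5)] assms(6) by blast
qed

lemma dim_le_aff_dim_plus_one:
  fixes S :: "'a::euclidean_space set"
  shows "int (dim S) \<le> aff_dim S + 1"
proof -
  have "int (dim S) = aff_dim (insert 0 S)"
    by (simp add: aff_dim_zero hull_inc dim_insert span_zero)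
  also have "\<dots> \<le> aff_dim S + 1" by (simp add: aff_dim_insert)
  finally show ?thesis .
qed

lemma span_low_dim_face:
  fixes Q :: "(real^'n::finite) set"
  assumes "convex Q" "Q \<subseteq> {x. a \<bullet> x = b}" "b \<noteq> 0" "aff_dim Q = int CARD('n) - 1" "k \<ge> 1"
    and "G face_of Q" "aff_dim G < int CARD('n) - int k" "x \<in> rel_interior Q"
  shows "dim (span G) + k \<le> CARD('n)" "x \<notin> span G"
proof -
  show "dim (span G) + k \<le> CARD('n)"
    using assms(7) dim_le_aff_dim_plus_one[of G] by simp
  have "G \<noteq> Q" using assms(4,5,7) by auto
  then show "x \<notin> span G"
    using rel_interior_notin_span_face[OF assms(1-3,6) _ assms(8)] by blast
qed

lemma rel_interior_approachable:
  fixes Q :: "'a::euclidean_space set"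
  assumes "convex Q" "x \<in> Q" "\<delta> > 0"
  obtains y where "y \<in> rel_interior Q" "dist y x < \<delta>"
proof -
  have "x \<in> closure (rel_interior Q)"
    using assms(2) closure_subset convex_closure_rel_interior[OF assms(1)] by blast
  then show ?thesis using that closure_approachable assms(3) by blast
qed

lemma in_Pk_maxI:
  fixes Q :: "(real^'n::finite) set"
  assumes "subspace W" "dim W = k" "x \<in> W" "x \<in> Q" "0 \<notin> Q"
    and "\<And>G. G face_of Q \<Longrightarrow> aff_dim G < int CARD('n) - int k \<Longrightarrow> W \<inter> span G \<subseteq> {0}"
  shows "W \<in> Pk_max Q k"
  unfolding Pk_max_def Pk_def Gr_def meets_def
proof (intro CollectI conjI allI impI bexI notI)
  fix G assume G: "G face_of Q \<and> aff_dim G < int CARD('n) - int k" and "\<exists>g\<in>G. g \<in> W"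
  then obtain g where "g \<in> G" "g \<in> W" by blast
  then have "g = 0" using assms(6) G span_base by blast
  moreover have "g \<in> Q" using G \<open>g \<in> G\<close> face_of_imp_subset by blast
  ultimately show False using assms(5) by blast
qed (use assms in auto)

section \<open>Density of P^[k]_max\<close>

lemma exists_Pk_max_near:
  fixes Q :: "(real^'n::finite) set"
  assumes "polytope Q" "Q \<subseteq> {x. a \<bullet> x = b}" "b \<noteq> 0" "aff_dim Q = int CARD('n) - 1"
    and "V \<in> Pk Q k" "e > 0"
  shows "\<exists>W\<in>Pk_max Q k. dist (proj_matrix W) (proj_matrix V) < e"
proof -
  let ?n = "real CARD('n)"
  have "0 \<notin> Q" using assms(2,3) by auto
  have "convex Q" using assms(1) polytope_imp_convex by blast
  have "subspace V" and "dim V = k" using assms(5) by (auto simp: Pk_def Gr_def)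
  obtain x0 where "x0 \<in> V" "x0 \<in> Q" using assms(5) by (auto simp: Pk_def meets_def)
  then have "x0 \<noteq> 0" using \<open>0 \<notin> Q\<close> by blast
  then have "k \<ge> 1" using \<open>dim V = k\<close> \<open>x0 \<in> V\<close> dim_eq_0[of V] by (cases k) auto
  define \<eta> where "\<eta> = min (1 / (2 * real k)) (e / (6 * real k * ?n * ?n))"
  have "\<eta> > 0" using \<open>k \<ge> 1\<close> \<open>e > 0\<close> by (simp add: \<eta>_def)
  have small: "real k * \<eta> \<le> 1/2"
    using \<open>k \<ge> 1\<close> mult_left_mono[of \<eta> "1 / (2 * real k)" "real k"] by (simp add: \<eta>_def)
  have "?n * ?n * (3 * real k * \<eta>) \<le> e / 2"
    using \<open>k \<ge> 1\<close> mult_left_mono[of \<eta> "e / (6 * real k * ?n * ?n)" "?n * ?n * 3 * real k"]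
    by (simp add: \<eta>_def field_simps)
  then have close: "?n * ?n * (3 * real k * \<eta>) < e" using \<open>e > 0\<close> by linarith
  \<comment> \<open>in the relative interior, x1 lies in the span of no proper face\<close>
  obtain x1 where "x1 \<in> rel_interior Q" and "dist x1 x0 < \<eta> * norm x0"
    using rel_interior_approachable[OF \<open>convex Q\<close> \<open>x0 \<in> Q\<close>, of "\<eta> * norm x0"]
      \<open>\<eta> > 0\<close> \<open>x0 \<noteq> 0\<close> by auto
  then have "x1 \<in> Q" using rel_interior_subset by blast
  define v where "v = x0 /\<^sub>R norm x0"
  define u where "u = x1 /\<^sub>R norm x0"
  have "v \<in> V" using \<open>subspace V\<close> \<open>x0 \<in> V\<close> by (simp add: v_def subspace_scale)
  have "norm v = 1" using \<open>x0 \<noteq> 0\<close> by (simp add: v_def)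
  have "u - v = (x1 - x0) /\<^sub>R norm x0" by (simp add: u_def v_def scaleR_diff_right)
  then have "norm (u - v) = norm (x1 - x0) / norm x0" by (simp add: divide_inverse mult.commute)
  also have "\<dots> < \<eta>"
    using \<open>dist x1 x0 < \<eta> * norm x0\<close> \<open>x0 \<noteq> 0\<close> by (simp add: dist_norm divide_less_eq)
  finally have "norm (u - v) < \<eta>" .
  have x1_u: "x1 = norm x0 *\<^sub>R u" using \<open>x0 \<noteq> 0\<close> by (simp add: u_def)
  define Fam where "Fam = {G. G face_of Q \<and> aff_dim G < int CARD('n) - int k}"
  have "finite Fam"
    using finite_polytope_faces[OF assms(1)] by (rule finite_subset[rotated]) (auto simp: Fam_def)
  have "\<forall>L\<in>span ` Fam. subspace L \<and> dim L + dim V \<le> CARD('n) \<and> u \<notin> L"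
  proof (intro ballI conjI)
    fix L assume "L \<in> span ` Fam"
    then obtain G where G: "G face_of Q" "aff_dim G < int CARD('n) - int k" and L: "L = span G"
      by (auto simp: Fam_def)
    note face = span_low_dim_face[OF \<open>convex Q\<close> assms(2-4) \<open>k \<ge> 1\<close> G \<open>x1 \<in> rel_interior Q\<close>]
    show "subspace L" "dim L + dim V \<le> CARD('n)" using face(1) \<open>dim V = k\<close> by (simp_all add: L)
    show "u \<notin> L" using face(2) x1_u span_mul[of u G "norm x0"] by (auto simp: L)
  qed
  moreover have "real (dim V) * \<eta> \<le> 1/2" using small \<open>dim V = k\<close> by simp
  moreover have "finite (span ` Fam)" using \<open>finite Fam\<close> by simp
  ultimately obtain W where "subspace W" "dim W = dim V" "u \<in> W"
    and avoid: "\<forall>L\<in>span ` Fam. W \<inter> L \<subseteq> {0}"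
    and near: "\<And>x. norm (orth_proj V x - orth_proj W x) \<le> 3 * real (dim V) * \<eta> * norm x"
    using exists_subspace_near_avoiding[OF \<open>subspace V\<close> \<open>v \<in> V\<close> \<open>norm v = 1\<close> \<open>norm (u - v) < \<eta>\<close>]
    by blast
  have "x1 \<in> W" using \<open>subspace W\<close> \<open>u \<in> W\<close> x1_u by (simp add: subspace_scale)
  then have "W \<in> Pk_max Q k"
    using \<open>subspace W\<close> \<open>dim W = dim V\<close> \<open>dim V = k\<close> \<open>x1 \<in> Q\<close> \<open>0 \<notin> Q\<close> avoid
    by (intro in_Pk_maxI) (auto simp: Fam_def)
  moreover have "dist (proj_matrix W) (proj_matrix V) < e"
    using dist_proj_matrix_le[OF \<open>subspace V\<close> \<open>subspace W\<close> near] close \<open>dim V = k\<close>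
    by (simp add: dist_commute)
  ultimately show ?thesis by blast
qed

theorem proposition3p6:
  fixes S :: "(real^'n::finite) set" and a :: "real^'n" and b :: real and k :: nat
  assumes "finite S" and "b \<noteq> 0" and "\<forall>v\<in>S. a \<bullet> v = b"
    and "aff_dim (convex hull S) = int CARD('n) - 1"
    and "1 \<le> k" and "k \<le> CARD('n)"
  shows "Pk (convex hull S) k = (Gr_topology k TYPE('n)) closure_of (Pk_max (convex hull S) k)"
proof
  let ?Q = "convex hull S"
  have "polytope ?Q" using assms(1) by (auto simp: polytope_def)
  have "?Q \<subseteq> {x. a \<bullet> x = b}"
    using assms(3) by (intro hull_minimal) (auto simp: convex_hyperplane)
  have "Pk_max ?Q k \<subseteq> Pk ?Q k" by (auto simp: Pk_max_def)
  show "Pk ?Q k \<subseteq> Gr_topology k TYPE('n) closure_of Pk_max ?Q k"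
  proof
    fix V assume "V \<in> Pk ?Q k"
    moreover have "Pk_max ?Q k \<subseteq> Gr k TYPE('n)" by (auto simp: Pk_max_def Pk_def)
    ultimately show "V \<in> Gr_topology k TYPE('n) closure_of Pk_max ?Q k"
      using exists_Pk_max_near[OF \<open>polytope ?Q\<close> \<open>?Q \<subseteq> {x. a \<bullet> x = b}\<close> assms(2,4)]
      by (simp add: in_closure_of_Gr_iff) (simp add: Pk_def)
  qed
  show "Gr_topology k TYPE('n) closure_of Pk_max ?Q k \<subseteq> Pk ?Q k"
    using \<open>Pk_max ?Q k \<subseteq> Pk ?Q k\<close> closedin_Pk[of ?Q k] assms(1)
    by (simp add: closure_of_minimal compact_convex_hull finite_imp_compact)
qed

end
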